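(* For every positive integer $n$, $N'(n,n-1,0)=\frac{n(n+1)}{2}-1$.
   Context: $\mathbb{Z}_4$ is the ring of integers modulo $4$; a $\mathbb{Z}_4$-code of length $n$ is a $\mathbb{Z}_4$-submodule of $\mathbb{Z}_4^n$. Two codes are equivalent if one is obtained from the other by permuting coordinates and changing the signs of some coordinates. Every $\mathbb{Z}_4$-code is permutation-equivalent to one with generator matrix $\begin{pmatrix} I_{k_1} & A & B \\ O & 2I_{k_2} & 2D\end{pmatrix}$ with $A,D$ $(0,1)$-matrices and $B$ a $\mathbb{Z}_4$-matrix; the code then has type $4^{k_1}2^{k_2}$. The trivial extension of a code $C$ of length $n-1$ is $\{(c,0)\mid c\in C\}$ (the only code of length $0$ is the zero code). $N'(n,k_1,k_2)$ denotes the number of equivalence classes of $\mathbb{Z}_4$-codes of length $n$ and type $4^{k_1}2^{k_2}$ that are not equivalent to the trivial extension of any $\mathbb{Z}_4$-code of length $n-1$. *)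

theory Defs
  imports "HOL-Combinatorics.Permutations"
begin

text \<open>Vectors over Z_m of length n: functions nat => int with entries in {0..m-1},
  supported on {0..<n}.  Z_4^n is modelled with m = 4.\<close>

definition zvec :: "int \<Rightarrow> nat \<Rightarrow> (nat \<Rightarrow> int) \<Rightarrow> bool" where
  "zvec m n f \<longleftrightarrow> (\<forall>i. 0 \<le> f i \<and> f i < m) \<and> (\<forall>i\<ge>n. f i = 0)"

definition add_mod :: "int \<Rightarrow> (nat \<Rightarrow> int) \<Rightarrow> (nat \<Rightarrow> int) \<Rightarrow> nat \<Rightarrow> int" where
  "add_mod m x y = (\<lambda>i. (x i + y i) mod m)"

definition is_code :: "nat \<Rightarrow> (nat \<Rightarrow> int) set \<Rightarrow> bool" where
  "is_code n C \<longleftrightarrow> C \<subseteq> {f. zvec 4 n f} \<and> (\<lambda>_. 0) \<in> C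
     \<and> (\<forall>x\<in>C. \<forall>y\<in>C. add_mod 4 x y \<in> C)
     \<and> (\<forall>a::int. \<forall>x\<in>C. (\<lambda>i. (a * x i) mod 4) \<in> C)"

definition has_type :: "(nat \<Rightarrow> int) set \<Rightarrow> nat \<Rightarrow> nat \<Rightarrow> bool" where
  "has_type C k1 k2 \<longleftrightarrow> (\<exists>\<phi>.
     bij_betw \<phi> C {(a, b). zvec 4 k1 a \<and> zvec 2 k2 b} \<and>
     (\<forall>x\<in>C. \<forall>y\<in>C. \<phi> (add_mod 4 x y) =
        (add_mod 4 (fst (\<phi> x)) (fst (\<phi> y)), add_mod 2 (snd (\<phi> x)) (snd (\<phi> y)))))"

definition code_equiv :: "nat \<Rightarrow> (nat \<Rightarrow> int) set \<Rightarrow> (nat \<Rightarrow> int) set \<Rightarrow> bool" where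
  "code_equiv n C D \<longleftrightarrow> (\<exists>\<sigma> s. \<sigma> permutes {0..<n} \<and> (\<forall>i. s i \<in> {1, -1::int}) \<and>
     D = (\<lambda>c. \<lambda>i. (s i * c (\<sigma> i)) mod 4) ` C)"

text \<open>Trivial extension of a code of length n-1 to length n: append a zero coordinate
  (coordinate n-1).  With our representation this is the same set of functions.\<close>
definition triv_ext :: "(nat \<Rightarrow> int) set \<Rightarrow> (nat \<Rightarrow> int) set" where
  "triv_ext D = {c. c \<in> D}"

definition codes_nontriv :: "nat \<Rightarrow> nat \<Rightarrow> nat \<Rightarrow> (nat \<Rightarrow> int) set set" where
  "codes_nontriv n k1 k2 = {C. is_code n C \<and> has_type C k1 k2 \<and>
     \<not> (\<exists>D. is_code (n - 1) D \<and> code_equiv n C (triv_ext D))}"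

definition Nprime :: "nat \<Rightarrow> nat \<Rightarrow> nat \<Rightarrow> nat" where
  "Nprime n k1 k2 = card (codes_nontriv n k1 k2 //
     {(C, D). C \<in> codes_nontriv n k1 k2 \<and> D \<in> codes_nontriv n k1 k2 \<and> code_equiv n C D})"

end

(* A code C of length n and type 4^(n-1) is the kernel of a functional
   x |-> sum_i v_i x_i (mod 4) with some v_j = 1.  Indeed, C has only 2^(n-1) elements of
   order at most 2, so some 2 e_j lies outside C; then deleting coordinate j maps C
   bijectively onto the vectors vanishing at j, and the preimages of the unit vectors
   determine v.  Sign changes make v a {0, 1, 2}-vector and a permutation sorts it into
   (0^c, 2^(t-c), 1^(n-t)) with c <= t < n.  The numbers c and t count the coordinates i
   with e_i in C, resp. 2 e_i in C, so they are invariants, and the equivalence classes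
   correspond exactly to the pairs c <= t < n.  The pair (n-1, n-1) gives Z_4^(n-1) + 0,
   a trivial extension, while every other canonical code has full support; this leaves
   n(n+1)/2 - 1 classes. *)

theory Submission
  imports Defs
begin

lemma zvec_nonneg: "zvec m n f \<Longrightarrow> 0 \<le> f i"
  and zvec_less: "zvec m n f \<Longrightarrow> f i < m"
  and zvec_beyond: "zvec m n f \<Longrightarrow> n \<le> i \<Longrightarrow> f i = 0"
  unfolding zvec_def by auto

lemma is_codeD:
  assumes "is_code n C"
  shows is_code_zvec: "x \<in> C \<Longrightarrow> zvec 4 n x"
    and is_code_zero: "(\<lambda>_. 0) \<in> C"
    and is_code_add: "x \<in> C \<Longrightarrow> y \<in> C \<Longrightarrow> add_mod 4 x y \<in> C"
    and is_code_smult: "x \<in> C \<Longrightarrow> (\<lambda>i. (a * x i) mod 4) \<in> C"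
  using assms unfolding is_code_def by auto

definition vectors_on :: "nat \<Rightarrow> (nat \<Rightarrow> int set) \<Rightarrow> (nat \<Rightarrow> int) set" where
  "vectors_on n A = {f. (\<forall>i<n. f i \<in> A i) \<and> (\<forall>i\<ge>n. f i = 0)}"

lemma bij_betw_restrict_vectors_on:
  "bij_betw (\<lambda>f. restrict f {..<n}) (vectors_on n A) (\<Pi>\<^sub>E i\<in>{..<n}. A i)"
proof (rule bij_betw_byWitness[where f' = "\<lambda>g i. if i < n then g i else 0"])
  show "\<forall>f\<in>vectors_on n A. (\<lambda>i. if i < n then restrict f {..<n} i else 0) = f"
    by (simp add: vectors_on_def fun_eq_iff)
  show "\<forall>g\<in>\<Pi>\<^sub>E i\<in>{..<n}. A i. restrict (\<lambda>i. if i < n then g i else 0) {..<n} = g"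
  proof
    fix g assume g: "g \<in> (\<Pi>\<^sub>E i\<in>{..<n}. A i)"
    have "restrict (\<lambda>i. if i < n then g i else 0) {..<n} = restrict g {..<n}"
      by (rule restrict_ext) simp
    also have "\<dots> = g" using PiE_restrict[OF g] .
    finally show "restrict (\<lambda>i. if i < n then g i else 0) {..<n} = g" .
  qed
  show "(\<lambda>f. restrict f {..<n}) ` vectors_on n A \<subseteq> (\<Pi>\<^sub>E i\<in>{..<n}. A i)"
  proof (rule image_subsetI)
    fix f assume "f \<in> vectors_on n A"
    then show "restrict f {..<n} \<in> (\<Pi>\<^sub>E i\<in>{..<n}. A i)"
      unfolding restrict_PiE_iff vectors_on_def by simp
  qed
  show "(\<lambda>g i. if i < n then g i else 0) ` (\<Pi>\<^sub>E i\<in>{..<n}. A i) \<subseteq> vectors_on n A"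
  proof (rule image_subsetI)
    fix g assume g: "g \<in> (\<Pi>\<^sub>E i\<in>{..<n}. A i)"
    have "g i \<in> A i" if "i < n" for i using PiE_mem[OF g] that by simp
    then show "(\<lambda>i. if i < n then g i else 0) \<in> vectors_on n A" by (simp add: vectors_on_def)
  qed
qed

lemma card_vectors_on:
  assumes "\<And>i. i < n \<Longrightarrow> finite (A i)"
  shows "finite (vectors_on n A)" "card (vectors_on n A) = (\<Prod>i<n. card (A i))"
proof -
  have "finite (\<Pi>\<^sub>E i\<in>{..<n}. A i)" using assms by (intro finite_PiE) auto
  then show "finite (vectors_on n A)"
    using bij_betw_finite[OF bij_betw_restrict_vectors_on] by blast
  show "card (vectors_on n A) = (\<Prod>i<n. card (A i))"
    using bij_betw_same_card[OF bij_betw_restrict_vectors_on] by (simp add: card_PiE)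
qed

lemma zvec_iff_vectors_on:
  assumes "0 < m"
  shows "zvec m n f \<longleftrightarrow> f \<in> vectors_on n (\<lambda>_. {0..<m})"
proof
  assume f: "f \<in> vectors_on n (\<lambda>_. {0..<m})"
  then have "0 \<le> f i \<and> f i < m" for i using assms by (cases "i < n") (auto simp: vectors_on_def)
  with f show "zvec m n f" by (simp add: zvec_def vectors_on_def)
qed (simp add: zvec_def vectors_on_def)

lemma card_zvec: "0 < m \<Longrightarrow> finite {f. zvec m n f} \<and> card {f. zvec m n f} = nat m ^ n"
  using card_vectors_on[of n "\<lambda>_. {0..<m}"] by (simp add: zvec_iff_vectors_on)

lemma card_vectors_on_coord_zero:
  assumes "j < n"
  shows "finite (vectors_on n (\<lambda>i. if i = j then {0} else {0..<4}))"
    and "card (vectors_on n (\<lambda>i. if i = j then {0} else {0..<4})) = 4 ^ (n - 1)"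
proof -
  let ?A = "\<lambda>i. if i = j then {0} else {0..<4::int}"
  have "(\<Prod>i<n. card (?A i)) = card (?A j) * (\<Prod>i\<in>{..<n} - {j}. card (?A i))"
    using assms by (simp add: prod.remove)
  also have "(\<Prod>i\<in>{..<n} - {j}. card (?A i)) = (\<Prod>i\<in>{..<n} - {j}. 4)"
    by (rule prod.cong) auto
  finally have "(\<Prod>i<n. card (?A i)) = 4 ^ (n - 1)" using assms by simp
  then show "finite (vectors_on n ?A)" "card (vectors_on n ?A) = 4 ^ (n - 1)"
    using card_vectors_on[of n ?A] by simp_all
qed

lemma card_vectors_on_zero_two:
  "finite (vectors_on n (\<lambda>_. {0, 2}))" "card (vectors_on n (\<lambda>_. {0, 2})) = 2 ^ n"
proof -
  have "card {0, 2::int} = 2" by simp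
  then have "(\<Prod>i<n. card {0, 2::int}) = 2 ^ n" by (simp only: prod_constant card_lessThan)
  then show "finite (vectors_on n (\<lambda>_. {0, 2}))" "card (vectors_on n (\<lambda>_. {0, 2})) = 2 ^ n"
    using card_vectors_on[of n "\<lambda>_. {0, 2}"] by simp_all
qed

section \<open>Monomial equivalence\<close>

definition monomial_map :: "(nat \<Rightarrow> nat) \<Rightarrow> (nat \<Rightarrow> int) \<Rightarrow> (nat \<Rightarrow> int) \<Rightarrow> nat \<Rightarrow> int" where
  "monomial_map \<sigma> s c = (\<lambda>i. (s i * c (\<sigma> i)) mod 4)"

definition sign_vector :: "(nat \<Rightarrow> int) \<Rightarrow> bool" where
  "sign_vector s \<longleftrightarrow> (\<forall>i. s i \<in> {1, -1})"

lemma code_equiv_iff_monomial_map: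
  "code_equiv n C D \<longleftrightarrow> (\<exists>\<sigma> s. \<sigma> permutes {0..<n} \<and> sign_vector s \<and> D = monomial_map \<sigma> s ` C)"
  unfolding code_equiv_def monomial_map_def sign_vector_def by simp

lemma sign_vector_square: "sign_vector s \<Longrightarrow> s i * s i = 1"
  unfolding sign_vector_def by (cases "s i = 1") auto

lemma sign_vector_mult_mod_cancel:
  assumes "sign_vector s" "0 \<le> x" "x < 4"
  shows "(s i * ((s i * x) mod 4)) mod 4 = x"
proof -
  have "(s i * ((s i * x) mod 4)) mod 4 = (s i * s i * x) mod 4"
    by (simp add: mod_mult_right_eq mult.assoc)
  then show ?thesis using assms by (simp add: sign_vector_square)
qed

lemma zvec_monomial_map: "\<sigma> permutes {0..<n} \<Longrightarrow> zvec 4 n c \<Longrightarrow> zvec 4 n (monomial_map \<sigma> s c)"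
  unfolding zvec_def monomial_map_def by (auto simp: permutes_not_in)

lemma is_code_monomial_map:
  assumes "is_code n C" "\<sigma> permutes {0..<n}"
  shows "is_code n (monomial_map \<sigma> s ` C)"
  unfolding is_code_def
proof (intro conjI ballI allI subsetI)
  show "x \<in> {f. zvec 4 n f}" if "x \<in> monomial_map \<sigma> s ` C" for x
    using that zvec_monomial_map[OF assms(2)] is_code_zvec[OF assms(1)] by auto
  have "(\<lambda>_. 0) = monomial_map \<sigma> s (\<lambda>_. 0)" by (simp add: monomial_map_def)
  then show "(\<lambda>_. 0) \<in> monomial_map \<sigma> s ` C" using is_code_zero[OF assms(1)] by auto
next
  fix x y assume "x \<in> monomial_map \<sigma> s ` C" "y \<in> monomial_map \<sigma> s ` C"
  then obtain x' y' where "x' \<in> C" "y' \<in> C" "x = monomial_map \<sigma> s x'" "y = monomial_map \<sigma> s y'"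
    by auto
  moreover have "add_mod 4 (monomial_map \<sigma> s x') (monomial_map \<sigma> s y') = monomial_map \<sigma> s (add_mod 4 x' y')"
    unfolding add_mod_def monomial_map_def by (auto simp: mod_simps algebra_simps)
  ultimately show "add_mod 4 x y \<in> monomial_map \<sigma> s ` C" using is_code_add[OF assms(1)] by auto
next
  fix a x assume "x \<in> monomial_map \<sigma> s ` C"
  then obtain x' where "x' \<in> C" "x = monomial_map \<sigma> s x'" by auto
  moreover have "(\<lambda>i. (a * monomial_map \<sigma> s x' i) mod 4) = monomial_map \<sigma> s (\<lambda>i. (a * x' i) mod 4)"
    unfolding monomial_map_def by (auto simp: mod_simps algebra_simps)
  ultimately show "(\<lambda>i. (a * x i) mod 4) \<in> monomial_map \<sigma> s ` C" using is_code_smult[OF assms(1)] by auto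
qed

lemma monomial_map_inverse:
  assumes "\<sigma> permutes {0..<n}" "sign_vector s" "zvec 4 n c"
  shows "monomial_map (inv \<sigma>) (s \<circ> inv \<sigma>) (monomial_map \<sigma> s c) = c"
proof
  fix j
  show "monomial_map (inv \<sigma>) (s \<circ> inv \<sigma>) (monomial_map \<sigma> s c) j = c j"
    using sign_vector_mult_mod_cancel[OF assms(2) zvec_nonneg[OF assms(3)] zvec_less[OF assms(3)]]
    by (simp add: monomial_map_def permutes_inverses[OF assms(1)])
qed

lemma monomial_map_comp:
  "monomial_map \<tau> t (monomial_map \<sigma> s c) = monomial_map (\<sigma> \<circ> \<tau>) (\<lambda>i. t i * s (\<tau> i)) c"
  unfolding monomial_map_def by (auto simp: mod_simps algebra_simps)

lemma sign_vector_comp: "sign_vector s \<Longrightarrow> sign_vector (s \<circ> f)"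
  unfolding sign_vector_def by simp

lemma sign_vector_mult:
  assumes "sign_vector s" "sign_vector t"
  shows "sign_vector (\<lambda>i. t i * s (f i))"
  unfolding sign_vector_def
proof
  fix i
  have "t i = 1 \<or> t i = -1" "s (f i) = 1 \<or> s (f i) = -1"
    using assms unfolding sign_vector_def by auto
  then show "t i * s (f i) \<in> {1, -1}" by auto
qed

lemma code_equiv_sym:
  assumes "code_equiv n C D" "is_code n C"
  shows "code_equiv n D C"
proof -
  obtain \<sigma> s where \<sigma>s: "\<sigma> permutes {0..<n}" "sign_vector s" "D = monomial_map \<sigma> s ` C"
    using assms(1) unfolding code_equiv_iff_monomial_map by blast
  have "C = monomial_map (inv \<sigma>) (s \<circ> inv \<sigma>) ` D"
    using monomial_map_inverse[OF \<sigma>s(1,2)] is_code_zvec[OF assms(2)]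
    unfolding \<sigma>s(3) image_image by simp
  then show ?thesis
    unfolding code_equiv_iff_monomial_map
    using permutes_inv[OF \<sigma>s(1)] sign_vector_comp[OF \<sigma>s(2)] by blast
qed

lemma code_equiv_trans:
  assumes "code_equiv n C D" "code_equiv n D E"
  shows "code_equiv n C E"
proof -
  obtain \<sigma> s where \<sigma>s: "\<sigma> permutes {0..<n}" "sign_vector s" "D = monomial_map \<sigma> s ` C"
    using assms(1) unfolding code_equiv_iff_monomial_map by blast
  obtain \<tau> t where \<tau>t: "\<tau> permutes {0..<n}" "sign_vector t" "E = monomial_map \<tau> t ` D"
    using assms(2) unfolding code_equiv_iff_monomial_map by blast
  have "E = monomial_map (\<sigma> \<circ> \<tau>) (\<lambda>i. t i * s (\<tau> i)) ` C"
    unfolding \<tau>t(3) \<sigma>s(3) image_image monomial_map_comp ..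
  then show ?thesis
    unfolding code_equiv_iff_monomial_map
    using permutes_compose[OF \<tau>t(1) \<sigma>s(1)] sign_vector_mult[OF \<sigma>s(2) \<tau>t(2)] by blast
qed

definition unit_vec :: "nat \<Rightarrow> int \<Rightarrow> nat \<Rightarrow> int" where
  "unit_vec p r = (\<lambda>k. if k = p then r else 0)"

lemma is_code_unit_vec_smult:
  assumes "is_code n C" "unit_vec p a \<in> C"
  shows "unit_vec p ((m * a) mod 4) \<in> C"
proof -
  have "(\<lambda>i. (m * unit_vec p a i) mod 4) = unit_vec p ((m * a) mod 4)"
    unfolding unit_vec_def by auto
  then show ?thesis using is_code_smult[OF assms, of m] by simp
qed

lemma unit_vec_sign_smult_in_code_iff:
  assumes "is_code n C" "sign_vector s" "0 \<le> r" "r < 4"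
  shows "unit_vec p ((s i * r) mod 4) \<in> C \<longleftrightarrow> unit_vec p r \<in> C"
  using is_code_unit_vec_smult[OF assms(1), of p _ "s i"]
    sign_vector_mult_mod_cancel[OF assms(2-4), of i] by metis

lemma monomial_map_unit_vec:
  assumes "\<sigma> permutes {0..<n}"
  shows "monomial_map \<sigma> s (unit_vec (\<sigma> i) r) = unit_vec i ((s i * r) mod 4)"
  using permutes_inj[OF assms] by (auto simp: monomial_map_def unit_vec_def fun_eq_iff dest: injD)

lemma unit_vec_in_monomial_image_iff:
  assumes C: "is_code n C" and \<sigma>: "\<sigma> permutes {0..<n}" and s: "sign_vector s"
    and r: "0 \<le> r" "r < 4"
  shows "unit_vec i r \<in> monomial_map \<sigma> s ` C \<longleftrightarrow> unit_vec (\<sigma> i) r \<in> C"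
proof
  assume "unit_vec i r \<in> monomial_map \<sigma> s ` C"
  then obtain c where c: "c \<in> C" "monomial_map \<sigma> s c = unit_vec i r" by auto
  have "c = monomial_map (inv \<sigma>) (s \<circ> inv \<sigma>) (unit_vec i r)"
    using monomial_map_inverse[OF \<sigma> s is_code_zvec[OF C c(1)]] c(2) by simp
  also have "\<dots> = unit_vec (\<sigma> i) ((s i * r) mod 4)"
    using monomial_map_unit_vec[OF permutes_inv[OF \<sigma>], of "s \<circ> inv \<sigma>" "\<sigma> i" r]
    by (simp add: permutes_inverses[OF \<sigma>])
  finally show "unit_vec (\<sigma> i) r \<in> C"
    using c(1) unit_vec_sign_smult_in_code_iff[OF C s r] by simp
next
  assume "unit_vec (\<sigma> i) r \<in> C"
  then have "unit_vec (\<sigma> i) ((s i * r) mod 4) \<in> C"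
    using unit_vec_sign_smult_in_code_iff[OF C s r] by simp
  then have "monomial_map \<sigma> s (unit_vec (\<sigma> i) ((s i * r) mod 4)) \<in> monomial_map \<sigma> s ` C" by simp
  then show "unit_vec i r \<in> monomial_map \<sigma> s ` C"
    unfolding monomial_map_unit_vec[OF \<sigma>] sign_vector_mult_mod_cancel[OF s r] .
qed

definition unit_vec_count :: "nat \<Rightarrow> int \<Rightarrow> (nat \<Rightarrow> int) set \<Rightarrow> nat" where
  "unit_vec_count n r C = card {i. i < n \<and> unit_vec i r \<in> C}"

lemma card_Collect_permutes:
  fixes n :: nat
  assumes "\<sigma> permutes {0..<n}"
  shows "card {i. i < n \<and> P (\<sigma> i)} = card {j. j < n \<and> P j}"
proof -
  have "\<sigma> i < n \<longleftrightarrow> i < n" for i using permutes_in_image[OF assms, of i] by auto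
  then have "{i. i < n \<and> P (\<sigma> i)} = \<sigma> -` {j. j < n \<and> P j}" by auto
  moreover have "card (\<sigma> -` {j. j < n \<and> P j}) = card {j. j < n \<and> P j}"
    using permutes_surj[OF assms] by (intro card_vimage_inj[OF permutes_inj[OF assms]]) auto
  ultimately show ?thesis by simp
qed

lemma unit_vec_count_code_equiv:
  assumes "is_code n C" "code_equiv n C D" "0 \<le> r" "r < 4"
  shows "unit_vec_count n r D = unit_vec_count n r C"
proof -
  obtain \<sigma> s where \<sigma>s: "\<sigma> permutes {0..<n}" "sign_vector s" "D = monomial_map \<sigma> s ` C"
    using assms(2) unfolding code_equiv_iff_monomial_map by blast
  then have "{i. i < n \<and> unit_vec i r \<in> D} = {i. i < n \<and> unit_vec (\<sigma> i) r \<in> C}"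
    using unit_vec_in_monomial_image_iff[OF assms(1) \<sigma>s(1,2) assms(3,4)] by auto
  then show ?thesis
    unfolding unit_vec_count_def using card_Collect_permutes[OF \<sigma>s(1)] by simp
qed

section \<open>Kernel codes\<close>

definition kernel_code :: "nat \<Rightarrow> (nat \<Rightarrow> int) \<Rightarrow> (nat \<Rightarrow> int) set" where
  "kernel_code n v = {x. zvec 4 n x \<and> (\<Sum>i<n. v i * x i) mod 4 = 0}"

lemma sum_mult_mod_right:
  fixes v g :: "'a \<Rightarrow> int"
  shows "(\<Sum>i\<in>A. v i * (g i mod m)) mod m = (\<Sum>i\<in>A. v i * g i) mod m"
proof -
  have "(\<Sum>i\<in>A. v i * (g i mod m)) mod m = (\<Sum>i\<in>A. (v i * (g i mod m)) mod m) mod m"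
    by (simp add: mod_sum_eq)
  also have "\<dots> = (\<Sum>i\<in>A. (v i * g i) mod m) mod m" by (simp add: mod_mult_right_eq)
  also have "\<dots> = (\<Sum>i\<in>A. v i * g i) mod m" by (simp add: mod_sum_eq)
  finally show ?thesis .
qed

lemma zvec_eq_if_mod_eq:
  assumes "zvec m n x" "zvec m n y" "x i mod m = y i mod m"
  shows "x i = y i"
  using assms(3) mod_pos_pos_trivial[OF zvec_nonneg[OF assms(1)] zvec_less[OF assms(1)]]
    mod_pos_pos_trivial[OF zvec_nonneg[OF assms(2)] zvec_less[OF assms(2)]] by simp

lemma kernel_code_cong:
  assumes "\<And>i. i < n \<Longrightarrow> v i mod 4 = w i mod 4"
  shows "kernel_code n v = kernel_code n w"
proof -
  have "(\<Sum>i<n. v i * x i) mod 4 = (\<Sum>i<n. w i * x i) mod 4" for x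
  proof -
    have "(\<Sum>i<n. v i * x i) mod 4 = (\<Sum>i<n. x i * (v i mod 4)) mod 4"
      using sum_mult_mod_right[of x v 4 "{..<n}"] by (simp add: mult.commute)
    also have "\<dots> = (\<Sum>i<n. x i * (w i mod 4)) mod 4" using assms by simp
    also have "\<dots> = (\<Sum>i<n. w i * x i) mod 4"
      using sum_mult_mod_right[of x w 4 "{..<n}"] by (simp add: mult.commute)
    finally show ?thesis .
  qed
  then show ?thesis unfolding kernel_code_def by simp
qed

lemma is_code_kernel_code: "is_code n (kernel_code n v)"
  unfolding is_code_def
proof (intro conjI ballI allI subsetI)
  show "x \<in> {f. zvec 4 n f}" if "x \<in> kernel_code n v" for x
    using that by (simp add: kernel_code_def)
  show "(\<lambda>_. 0) \<in> kernel_code n v" by (simp add: kernel_code_def zvec_def)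
next
  fix x y assume x: "x \<in> kernel_code n v" and y: "y \<in> kernel_code n v"
  have "(\<Sum>i<n. v i * add_mod 4 x y i) mod 4 = ((\<Sum>i<n. v i * x i) + (\<Sum>i<n. v i * y i)) mod 4"
    unfolding add_mod_def sum_mult_mod_right by (simp add: algebra_simps sum.distrib)
  also have "\<dots> = 0" using x y unfolding kernel_code_def by (simp add: mod_add_eq[symmetric])
  finally show "add_mod 4 x y \<in> kernel_code n v"
    using x y unfolding kernel_code_def zvec_def add_mod_def by auto
next
  fix a x assume x: "x \<in> kernel_code n v"
  have "(\<Sum>i<n. v i * ((a * x i) mod 4)) mod 4 = (a * (\<Sum>i<n. v i * x i)) mod 4"
    unfolding sum_mult_mod_right by (simp add: algebra_simps sum_distrib_left)
  also have "\<dots> = 0" using x unfolding kernel_code_def by (simp add: mod_mult_right_eq[symmetric])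
  finally show "(\<lambda>i. (a * x i) mod 4) \<in> kernel_code n v"
    using x unfolding kernel_code_def zvec_def by auto
qed

lemma kernel_code_eqI_off_coord:
  assumes "x \<in> kernel_code n v" "y \<in> kernel_code n v" "j < n" "v j = 1"
    and "\<And>i. i \<noteq> j \<Longrightarrow> x i = y i"
  shows "x = y"
proof -
  have split: "(\<Sum>i<n. v i * z i) = z j + (\<Sum>i\<in>{..<n} - {j}. v i * z i)" for z
    using assms(3,4) by (simp add: sum.remove)
  have "(\<Sum>i\<in>{..<n} - {j}. v i * x i) = (\<Sum>i\<in>{..<n} - {j}. v i * y i)"
    using assms(5) by (intro sum.cong) auto
  then have "(x j + (\<Sum>i\<in>{..<n} - {j}. v i * x i)) mod 4 = (y j + (\<Sum>i\<in>{..<n} - {j}. v i * x i)) mod 4"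
    using assms(1,2) unfolding kernel_code_def split by simp
  then have "x j mod 4 = y j mod 4" by (simp add: mod_eq_dvd_iff)
  then have "x j = y j"
    using assms(1,2) unfolding kernel_code_def by (blast intro: zvec_eq_if_mod_eq)
  then show ?thesis using assms(5) by (metis ext)
qed

lemma monomial_map_in_kernel_code:
  assumes "\<sigma> permutes {0..<n}" "sign_vector s" "x \<in> kernel_code n v"
  shows "monomial_map \<sigma> s x \<in> kernel_code n (\<lambda>i. s i * v (\<sigma> i))"
proof -
  have bij: "bij_betw \<sigma> {..<n} {..<n}"
    using permutes_imp_bij[OF assms(1)] by (simp add: atLeast0LessThan)
  have "(\<Sum>i<n. s i * v (\<sigma> i) * monomial_map \<sigma> s x i) mod 4
      = (\<Sum>i<n. s i * v (\<sigma> i) * (s i * x (\<sigma> i))) mod 4"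
    unfolding monomial_map_def by (rule sum_mult_mod_right)
  also have "\<dots> = (\<Sum>i<n. v (\<sigma> i) * x (\<sigma> i)) mod 4"
  proof -
    have "s i * v (\<sigma> i) * (s i * x (\<sigma> i)) = (s i * s i) * (v (\<sigma> i) * x (\<sigma> i))" for i
      by (simp add: algebra_simps)
    then show ?thesis by (simp only: sign_vector_square[OF assms(2)] mult_1)
  qed
  also have "(\<Sum>i<n. v (\<sigma> i) * x (\<sigma> i)) = (\<Sum>i<n. v i * x i)"
    using sum.reindex_bij_betw[OF bij, of "\<lambda>i. v i * x i"] by simp
  finally show ?thesis
    using assms(3) zvec_monomial_map[OF assms(1)] unfolding kernel_code_def by auto
qed

lemma monomial_map_kernel_code:
  assumes \<sigma>: "\<sigma> permutes {0..<n}" and s: "sign_vector s"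
  shows "monomial_map \<sigma> s ` kernel_code n v = kernel_code n (\<lambda>i. s i * v (\<sigma> i))"
proof
  show "monomial_map \<sigma> s ` kernel_code n v \<subseteq> kernel_code n (\<lambda>i. s i * v (\<sigma> i))"
    using monomial_map_in_kernel_code[OF assms] by blast
next
  show "kernel_code n (\<lambda>i. s i * v (\<sigma> i)) \<subseteq> monomial_map \<sigma> s ` kernel_code n v"
  proof
    fix y assume y: "y \<in> kernel_code n (\<lambda>i. s i * v (\<sigma> i))"
    let ?x = "monomial_map (inv \<sigma>) (s \<circ> inv \<sigma>) y"
    have "?x \<in> kernel_code n (\<lambda>i. (s \<circ> inv \<sigma>) i * (s (inv \<sigma> i) * v (\<sigma> (inv \<sigma> i))))"
      using monomial_map_in_kernel_code[OF permutes_inv[OF \<sigma>] sign_vector_comp[OF s] y] .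
    also have "\<dots> = kernel_code n v"
      using sign_vector_square[OF s] by (simp add: permutes_inverses[OF \<sigma>] mult.assoc[symmetric])
    finally have "?x \<in> kernel_code n v" .
    moreover have "monomial_map \<sigma> s ?x = y"
    proof
      fix i
      have "0 \<le> y i" "y i < 4"
        using y unfolding kernel_code_def by (auto intro: zvec_nonneg zvec_less)
      then show "monomial_map \<sigma> s ?x i = y i"
        using sign_vector_mult_mod_cancel[OF s]
        by (simp add: monomial_map_def permutes_inverses[OF \<sigma>])
    qed
    ultimately show "y \<in> monomial_map \<sigma> s ` kernel_code n v" by (metis image_eqI)
  qed
qed

lemma has_type_kernel_code:
  assumes n: "n \<ge> 1" and v: "v (n - 1) = 1"
  shows "has_type (kernel_code n v) (n - 1) 0"
proof -
  define \<phi> where "\<phi> = (\<lambda>x::nat \<Rightarrow> int. (x(n - 1 := 0), (\<lambda>_::nat. 0::int)))"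
  have "inj_on \<phi> (kernel_code n v)"
  proof
    fix x y assume "x \<in> kernel_code n v" "y \<in> kernel_code n v" "\<phi> x = \<phi> y"
    then show "x = y"
      using n v by (intro kernel_code_eqI_off_coord[of x n v y "n - 1"])
        (auto simp: \<phi>_def fun_eq_iff split: if_splits)
  qed
  moreover have "\<phi> ` kernel_code n v = {(a, b). zvec 4 (n - 1) a \<and> zvec 2 0 b}"
  proof (intro set_eqI iffI)
    fix p assume "p \<in> \<phi> ` kernel_code n v"
    then show "p \<in> {(a, b). zvec 4 (n - 1) a \<and> zvec 2 0 b}"
      unfolding \<phi>_def kernel_code_def zvec_def by auto
  next
    fix p assume "p \<in> {(a, b). zvec 4 (n - 1) a \<and> zvec 2 0 b}"
    then obtain a b where p: "p = (a, b)" and a: "zvec 4 (n - 1) a" and "zvec 2 0 b" by auto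
    then have b: "b = (\<lambda>_. 0)" by (auto simp: zvec_def)
    define x where "x = a(n - 1 := (- (\<Sum>i<n - 1. v i * a i)) mod 4)"
    have "(\<Sum>i<n - 1. v i * x i) = (\<Sum>i<n - 1. v i * a i)"
      by (intro sum.cong) (auto simp: x_def)
    moreover have "(\<Sum>i<n. v i * x i) = (\<Sum>i<n - 1. v i * x i) + v (n - 1) * x (n - 1)"
      using n sum.lessThan_Suc[of "\<lambda>i. v i * x i" "n - 1"] by simp
    ultimately have "(\<Sum>i<n. v i * x i) = x (n - 1) + (\<Sum>i<n - 1. v i * a i)"
      using v by simp
    then have "(\<Sum>i<n. v i * x i) mod 4 = 0" by (simp add: x_def mod_add_left_eq)
    moreover have "zvec 4 n x" using a unfolding zvec_def x_def by auto
    ultimately have "x \<in> kernel_code n v" unfolding kernel_code_def by simp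
    moreover have "\<phi> x = p" using zvec_beyond[OF a, of "n - 1"] by (auto simp: \<phi>_def x_def p b)
    ultimately show "p \<in> \<phi> ` kernel_code n v" by blast
  qed
  moreover have "\<phi> (add_mod 4 x y) = (add_mod 4 (fst (\<phi> x)) (fst (\<phi> y)), add_mod 2 (snd (\<phi> x)) (snd (\<phi> y)))"
    for x y unfolding \<phi>_def add_mod_def by auto
  ultimately show ?thesis unfolding has_type_def bij_betw_def by blast
qed

lemma unit_vec_in_kernel_code_iff:
  assumes "p < n" "0 \<le> r" "r < 4"
  shows "unit_vec p r \<in> kernel_code n v \<longleftrightarrow> (v p * r) mod 4 = 0"
proof -
  have "(\<Sum>k<n. v k * unit_vec p r k) = (\<Sum>k<n. if k = p then v k * r else 0)"
    by (intro sum.cong) (auto simp: unit_vec_def)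
  also have "\<dots> = v p * r" using assms(1) by (simp add: sum.delta)
  finally have "(\<Sum>k<n. v k * unit_vec p r k) = v p * r" .
  moreover have "zvec 4 n (unit_vec p r)" using assms by (auto simp: zvec_def unit_vec_def)
  ultimately show ?thesis unfolding kernel_code_def by simp
qed

lemma kernel_code_witness:
  assumes "i < n" "p < n" "i \<noteq> p" "v p = 1"
  shows "(\<lambda>k. if k = i then 1 else if k = p then (- v i) mod 4 else 0) \<in> kernel_code n v"
    (is "?x \<in> _")
proof -
  have "(\<Sum>k<n. v k * ?x k) = (\<Sum>k<n. (if k = i then v i else 0) + (if k = p then v p * ((- v i) mod 4) else 0))"
    using assms(3) by (intro sum.cong) auto
  also have "\<dots> = v i + (- v i) mod 4"
    using assms by (simp add: sum.distrib sum.delta)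
  finally have "(\<Sum>k<n. v k * ?x k) mod 4 = 0" by (simp add: mod_add_right_eq)
  moreover have "zvec 4 n ?x" using assms(1,2) by (auto simp: zvec_def)
  ultimately show ?thesis unfolding kernel_code_def by simp
qed

section \<open>Codes of type 4^(n-1) are kernel codes\<close>

lemma has_type_0E:
  assumes "has_type C k 0"
  obtains \<phi> where "bij_betw \<phi> C {a. zvec 4 k a}"
    and "\<And>x y. x \<in> C \<Longrightarrow> y \<in> C \<Longrightarrow> \<phi> (add_mod 4 x y) = add_mod 4 (\<phi> x) (\<phi> y)"
proof -
  obtain \<psi> where \<psi>: "bij_betw \<psi> C {(a, b). zvec 4 k a \<and> zvec 2 0 b}"
    and hom: "\<forall>x\<in>C. \<forall>y\<in>C. \<psi> (add_mod 4 x y) =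
      (add_mod 4 (fst (\<psi> x)) (fst (\<psi> y)), add_mod 2 (snd (\<psi> x)) (snd (\<psi> y)))"
    using assms unfolding has_type_def by blast
  have "{(a, b). zvec 4 k a \<and> zvec 2 0 b} = {a. zvec 4 k a} \<times> {\<lambda>_. 0}"
    by (auto simp: zvec_def)
  moreover have "bij_betw fst ({a. zvec 4 k a} \<times> {\<lambda>_. 0::int}) {a. zvec 4 k a}"
    by (auto simp: bij_betw_def inj_on_def)
  ultimately have "bij_betw (fst \<circ> \<psi>) C {a. zvec 4 k a}"
    using \<psi> by (metis bij_betw_trans)
  with hom show ?thesis using that by auto
qed

lemma card_has_type_0:
  assumes "has_type C k 0"
  shows "finite C" "card C = 4 ^ k"
proof -
  obtain \<phi> where "bij_betw \<phi> C {a. zvec 4 k a}" using has_type_0E[OF assms] .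
  then show "finite C" "card C = 4 ^ k"
    using card_zvec[of 4 k] by (simp_all add: bij_betw_finite bij_betw_same_card)
qed

lemma add_self_mod_4:
  fixes x :: int
  assumes "0 \<le> x" "x < 4"
  shows "(x + x) mod 4 = 0 \<longleftrightarrow> x \<in> {0, 2}" and "(x + x) mod 4 = x \<longleftrightarrow> x = 0"
proof -
  have "x = 0 \<or> x = 1 \<or> x = 2 \<or> x = 3" using assms by linarith
  then show "(x + x) mod 4 = 0 \<longleftrightarrow> x \<in> {0, 2}" "(x + x) mod 4 = x \<longleftrightarrow> x = 0" by auto
qed

lemma card_le_if_add_self_eq_zero:
  assumes "has_type C k 0" "is_code n C" "E \<subseteq> C"
    and "\<And>x. x \<in> E \<Longrightarrow> add_mod 4 x x = (\<lambda>_. 0)"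
  shows "card E \<le> 2 ^ k"
proof -
  obtain \<phi> where \<phi>: "bij_betw \<phi> C {a. zvec 4 k a}"
    and hom: "\<And>x y. x \<in> C \<Longrightarrow> y \<in> C \<Longrightarrow> \<phi> (add_mod 4 x y) = add_mod 4 (\<phi> x) (\<phi> y)"
    using has_type_0E[OF assms(1)] by blast
  have range: "0 \<le> \<phi> x i" "\<phi> x i < 4" if "x \<in> C" for x i
    using bij_betwE[OF \<phi>] that by (auto intro: zvec_nonneg zvec_less)
  have zero: "\<phi> (\<lambda>_. 0) = (\<lambda>_. 0)"
  proof
    fix i
    have "add_mod 4 (\<lambda>_. 0::int) (\<lambda>_. 0) = (\<lambda>_. 0)" by (simp add: add_mod_def)
    then have "\<phi> (\<lambda>_. 0) = add_mod 4 (\<phi> (\<lambda>_. 0)) (\<phi> (\<lambda>_. 0))"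
      using hom[OF is_code_zero[OF assms(2)] is_code_zero[OF assms(2)]] by simp
    then have "(\<phi> (\<lambda>_. 0) i + \<phi> (\<lambda>_. 0) i) mod 4 = \<phi> (\<lambda>_. 0) i"
      unfolding add_mod_def by (metis (no_types))
    then show "\<phi> (\<lambda>_. 0) i = 0"
      using add_self_mod_4(2)[OF range[OF is_code_zero[OF assms(2)]]] by blast
  qed
  have "\<phi> ` E \<subseteq> vectors_on k (\<lambda>_. {0, 2})"
  proof
    fix a assume "a \<in> \<phi> ` E"
    then obtain x where x: "x \<in> E" "a = \<phi> x" by blast
    with assms(3) have "x \<in> C" by blast
    have "add_mod 4 a a = (\<lambda>_. 0)" using hom[OF \<open>x \<in> C\<close> \<open>x \<in> C\<close>] assms(4)[OF x(1)] zero x(2) by simp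
    then have "(a i + a i) mod 4 = 0" for i unfolding add_mod_def by (metis (no_types))
    then have "a i \<in> {0, 2}" for i using add_self_mod_4(1)[OF range[OF \<open>x \<in> C\<close>]] x(2) by blast
    moreover have "zvec 4 k a" using bij_betwE[OF \<phi>] \<open>x \<in> C\<close> x(2) by blast
    ultimately show "a \<in> vectors_on k (\<lambda>_. {0, 2})" by (simp add: vectors_on_def zvec_beyond)
  qed
  then have "card (\<phi> ` E) \<le> 2 ^ k"
    using card_mono[OF card_vectors_on_zero_two(1)] card_vectors_on_zero_two(2) by metis
  moreover have "inj_on \<phi> E" using \<phi> assms(3) by (auto simp: bij_betw_def intro: inj_on_subset)
  ultimately show ?thesis by (simp add: card_image)
qed

lemma is_code_sum:
  assumes "is_code n C" "finite I" "\<And>i. i \<in> I \<Longrightarrow> u i \<in> C"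
  shows "(\<lambda>k. (\<Sum>i\<in>I. a i * u i k) mod 4) \<in> C"
  using assms(2,3)
proof (induction I rule: finite_induct)
  case empty
  then show ?case using is_code_zero[OF assms(1)] by simp
next
  case (insert j I)
  have "(\<lambda>k. (\<Sum>i\<in>insert j I. a i * u i k) mod 4)
      = add_mod 4 (\<lambda>k. (a j * u j k) mod 4) (\<lambda>k. (\<Sum>i\<in>I. a i * u i k) mod 4)"
    unfolding add_mod_def using insert(1,2) by (auto simp: mod_add_eq)
  moreover have "(\<lambda>k. (a j * u j k) mod 4) \<in> C" using is_code_smult[OF assms(1) insert(4)] by simp
  ultimately show ?case using insert is_code_add[OF assms(1)] by simp
qed

(* Otherwise C contains the 2^n vectors with entries in {0, 2}, all of order at most 2. *)
lemma exists_unit_vec_two_notin_code: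
  assumes "is_code n C" "has_type C (n - 1) 0" "n \<ge> 1"
  shows "\<exists>j<n. unit_vec j 2 \<notin> C"
proof (rule ccontr)
  assume "\<not> (\<exists>j<n. unit_vec j 2 \<notin> C)"
  then have all: "\<And>j. j < n \<Longrightarrow> unit_vec j 2 \<in> C" by blast
  define E where "E = vectors_on n (\<lambda>_. {0, 2})"
  have "E \<subseteq> C"
  proof
    fix f assume f: "f \<in> E"
    have "(\<lambda>k. (\<Sum>i<n. (f i div 2) * unit_vec i 2 k) mod 4) = f"
    proof
      fix k
      have "(\<Sum>i<n. (f i div 2) * unit_vec i 2 k) = (if k < n then (f k div 2) * 2 else 0)"
        by (simp add: unit_vec_def if_distrib[of "\<lambda>x. _ * x"] sum.delta' cong: if_cong)
      moreover have "f k = (if k < n then (f k div 2) * 2 else 0)"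
        using f unfolding E_def vectors_on_def by (cases "k < n") auto
      ultimately show "(\<Sum>i<n. (f i div 2) * unit_vec i 2 k) mod 4 = f k"
        using f unfolding E_def vectors_on_def by (cases "k < n") auto
    qed
    moreover have "(\<lambda>k. (\<Sum>i<n. (f i div 2) * unit_vec i 2 k) mod 4) \<in> C"
      using all by (intro is_code_sum[OF assms(1)]) auto
    ultimately show "f \<in> C" by simp
  qed
  moreover have "add_mod 4 x x = (\<lambda>_. 0)" if "x \<in> E" for x
  proof
    fix i
    have "x i = 0 \<or> x i = 2" using that unfolding E_def vectors_on_def by (cases "i < n") auto
    then show "add_mod 4 x x i = 0" unfolding add_mod_def by auto
  qed
  ultimately have "card E \<le> 2 ^ (n - 1)" using card_le_if_add_self_eq_zero[OF assms(2,1)] by blast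
  moreover have "card E = 2 ^ n" unfolding E_def by (rule card_vectors_on_zero_two)
  moreover have "(2::nat) ^ (n - 1) < 2 ^ n" using assms(3) by simp
  ultimately show False by linarith
qed

(* Two codewords agreeing off j differ by d e_j, and 2 d e_j in C forces d = 0. *)
lemma inj_on_delete_coord:
  assumes C: "is_code n C" and two: "unit_vec j 2 \<notin> C"
  shows "inj_on (\<lambda>x. x(j := 0)) C"
proof
  fix x y assume x: "x \<in> C" and y: "y \<in> C" and eq: "x(j := 0) = y(j := 0)"
  define d where "d = add_mod 4 x (\<lambda>k. (-1 * y k) mod 4)"
  have "d \<in> C" unfolding d_def using is_code_add[OF C x is_code_smult[OF C y]] .
  have d: "d k = (x k - y k) mod 4" for k by (simp add: d_def add_mod_def mod_add_right_eq)
  have "d = unit_vec j (d j)"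
  proof
    fix k show "d k = unit_vec j (d j) k"
      using fun_cong[OF eq, of k] by (cases "k = j") (simp_all add: d unit_vec_def)
  qed
  have "d j = 0"
  proof (rule ccontr)
    assume "d j \<noteq> 0"
    moreover have "0 \<le> d j" "d j < 4" by (simp_all add: d)
    ultimately have "d j = 1 \<or> d j = 2 \<or> d j = 3" by linarith
    then have "(2 * d j) mod 4 = 2 \<or> d j = 2" by auto
    moreover have "unit_vec j ((2 * d j) mod 4) \<in> C"
      using is_code_unit_vec_smult[OF C] \<open>d \<in> C\<close> \<open>d = unit_vec j (d j)\<close> by metis
    ultimately show False using two \<open>d \<in> C\<close> \<open>d = unit_vec j (d j)\<close> by auto
  qed
  then have "x j mod 4 = y j mod 4" by (simp add: d mod_eq_dvd_iff dvd_eq_mod_eq_0)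
  with is_code_zvec[OF C x] is_code_zvec[OF C y] have "x j = y j" by (rule zvec_eq_if_mod_eq)
  then show "x = y" using eq by (metis fun_upd_triv fun_upd_upd)
qed

lemma bij_betw_delete_coord:
  assumes C: "is_code n C" and type: "has_type C (n - 1) 0" and j: "j < n"
    and two: "unit_vec j 2 \<notin> C"
  shows "bij_betw (\<lambda>x. x(j := 0)) C (vectors_on n (\<lambda>i. if i = j then {0} else {0..<4}))"
proof -
  have "(\<lambda>x. x(j := 0)) ` C \<subseteq> vectors_on n (\<lambda>i. if i = j then {0} else {0..<4})"
    using is_code_zvec[OF C] by (auto simp: zvec_def vectors_on_def)
  moreover have "card ((\<lambda>x. x(j := 0)) ` C) = card (vectors_on n (\<lambda>i. if i = j then {0} else {0..<4}))"
    using card_image[OF inj_on_delete_coord[OF C two]] card_has_type_0[OF type]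
      card_vectors_on_coord_zero[OF j] by simp
  ultimately have "(\<lambda>x. x(j := 0)) ` C = vectors_on n (\<lambda>i. if i = j then {0} else {0..<4})"
    using card_vectors_on_coord_zero[OF j] by (intro card_subset_eq) auto
  then show ?thesis using inj_on_delete_coord[OF C two] by (simp add: bij_betw_def)
qed

(* Each x in C equals (sum_{i <> j} x_i u_i) mod 4, as both lie in C and agree off j;
   its j-th coordinate gives the linear relation. *)
lemma code_subset_kernel_code:
  assumes C: "is_code n C" and j: "j < n" and inj: "inj_on (\<lambda>x. x(j := 0)) C"
    and u: "\<And>i. i \<in> {..<n} - {j} \<Longrightarrow> u i \<in> C \<and> (u i)(j := 0) = unit_vec i 1"
  shows "C \<subseteq> kernel_code n (\<lambda>i. if i = j then 1 else - u i j)"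
proof
  fix x assume x: "x \<in> C"
  let ?I = "{..<n} - {j}"
  let ?S = "\<Sum>i\<in>?I. x i * u i j"
  define y where "y = (\<lambda>k. (\<Sum>i\<in>?I. x i * u i k) mod 4)"
  have "y \<in> C" unfolding y_def using u by (intro is_code_sum[OF C]) auto
  moreover have "y(j := 0) = x(j := 0)"
  proof
    fix k
    show "(y(j := 0)) k = (x(j := 0)) k"
    proof (cases "k = j")
      case False
      have "u i k = (if i = k then 1 else 0)" if "i \<in> ?I" for i
      proof -
        have "((u i)(j := 0)) k = unit_vec i 1 k" using u[OF that] by simp
        then show ?thesis using False by (auto simp: unit_vec_def)
      qed
      then have "(\<Sum>i\<in>?I. x i * u i k) = (\<Sum>i\<in>?I. if i = k then x i else 0)"
        by (intro sum.cong) auto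
      also have "\<dots> = (if k < n then x k else 0)" using False by (simp add: sum.delta')
      finally show ?thesis
        using False zvec_beyond[OF is_code_zvec[OF C x], of k]
          zvec_nonneg[OF is_code_zvec[OF C x], of k] zvec_less[OF is_code_zvec[OF C x], of k]
        by (simp add: y_def)
    qed simp
  qed
  ultimately have "y = x" using inj x by (auto dest: inj_onD)
  then have xj: "x j = ?S mod 4" unfolding y_def by (auto simp: fun_eq_iff)
  have "(\<Sum>i<n. (if i = j then 1 else - u i j) * x i) = x j + (\<Sum>i\<in>?I. - u i j * x i)"
    using j by (simp add: sum.remove)
  also have "\<dots> = x j - ?S" by (simp add: sum_negf algebra_simps)
  finally have "(\<Sum>i<n. (if i = j then 1 else - u i j) * x i) mod 4 = 0"
    using xj by (simp add: mod_diff_left_eq)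
  then show "x \<in> kernel_code n (\<lambda>i. if i = j then 1 else - u i j)"
    using is_code_zvec[OF C x] unfolding kernel_code_def by simp
qed

lemma code_eq_kernel_code:
  assumes C: "is_code n C" and type: "has_type C (n - 1) 0" and n: "n \<ge> 1"
  obtains v j where "j < n" "v j = 1" "C = kernel_code n v"
proof -
  obtain j where j: "j < n" "unit_vec j 2 \<notin> C"
    using exists_unit_vec_two_notin_code[OF assms] by blast
  have bij: "bij_betw (\<lambda>x. x(j := 0)) C (vectors_on n (\<lambda>i. if i = j then {0} else {0..<4}))"
    using bij_betw_delete_coord[OF C type j] .
  have "\<exists>c\<in>C. c(j := 0) = unit_vec i 1" if "i \<in> {..<n} - {j}" for i
  proof -
    have "unit_vec i 1 \<in> vectors_on n (\<lambda>i. if i = j then {0} else {0..<4})" using that by (auto simp: unit_vec_def vectors_on_def)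
    then have "unit_vec i 1 \<in> (\<lambda>x. x(j := 0)) ` C" unfolding bij_betw_imp_surj_on[OF bij] .
    then obtain c where "c \<in> C" "unit_vec i 1 = c(j := 0)" by (rule imageE)
    then show ?thesis by (intro bexI[of _ c]) simp_all
  qed
  then obtain u where u: "\<And>i. i \<in> {..<n} - {j} \<Longrightarrow> u i \<in> C \<and> (u i)(j := 0) = unit_vec i 1"
    by metis
  define v where "v = (\<lambda>i. if i = j then 1 else - u i j)"
  have sub: "C \<subseteq> kernel_code n v"
    unfolding v_def using code_subset_kernel_code[OF C j(1) bij_betw_imp_inj_on[OF bij] u] .
  have "kernel_code n v \<subseteq> C"
  proof
    fix x assume x: "x \<in> kernel_code n v"
    then have "x(j := 0) \<in> vectors_on n (\<lambda>i. if i = j then {0} else {0..<4})" by (auto simp: kernel_code_def zvec_def vectors_on_def)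
    then have "x(j := 0) \<in> (\<lambda>x. x(j := 0)) ` C" unfolding bij_betw_imp_surj_on[OF bij] .
    then obtain z where z: "z \<in> C" "z(j := 0) = x(j := 0)" by (rule imageE) simp
    have "z i = x i" if "i \<noteq> j" for i using fun_cong[OF z(2), of i] that by simp
    then have "z = x"
      using sub z(1) x j(1) by (intro kernel_code_eqI_off_coord[of z n v x j]) (auto simp: v_def)
    then show "x \<in> C" using z(1) by simp
  qed
  then show ?thesis using that[OF j(1) _, of v] sub by (simp add: v_def)
qed

section \<open>Canonical forms\<close>

definition canon_weight :: "nat \<Rightarrow> nat \<Rightarrow> nat \<Rightarrow> int" where
  "canon_weight c t i = (if i < c then 0 else if i < t then 2 else 1)"

definition canon_code :: "nat \<Rightarrow> nat \<Rightarrow> nat \<Rightarrow> (nat \<Rightarrow> int) set" where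
  "canon_code n c t = kernel_code n (canon_weight c t)"

lemma permutes_onto_blocks:
  fixes A B D :: "nat set"
  assumes cover: "A \<union> B \<union> D = {0..<n}" and disj: "A \<inter> B = {}" "(A \<union> B) \<inter> D = {}"
  obtains \<sigma> where "\<sigma> permutes {0..<n}"
    "\<And>i. i < card A \<Longrightarrow> \<sigma> i \<in> A"
    "\<And>i. card A \<le> i \<Longrightarrow> i < card A + card B \<Longrightarrow> \<sigma> i \<in> B"
    "\<And>i. card A + card B \<le> i \<Longrightarrow> i < n \<Longrightarrow> \<sigma> i \<in> D"
proof -
  let ?a = "card A" and ?b = "card A + card B"
  have "finite (A \<union> B \<union> D)" using cover by simp
  then have fin: "finite A" "finite B" "finite D" by simp_all
  have "n = card (A \<union> B \<union> D)" using cover by simp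
  also have "\<dots> = card (A \<union> B) + card D" using fin disj(2) by (simp add: card_Un_disjoint)
  also have "card (A \<union> B) = card A + card B" using fin disj(1) by (simp add: card_Un_disjoint)
  finally have n: "n = ?b + card D" .
  obtain gA where gA: "bij_betw gA {0..<?a} A"
    using finite_same_card_bij[of "{0..<?a}" A] fin by auto
  obtain gB where gB: "bij_betw gB {?a..<?b} B"
    using finite_same_card_bij[of "{?a..<?b}" B] fin by auto
  obtain gD where gD: "bij_betw gD {?b..<n} D"
    using finite_same_card_bij[of "{?b..<n}" D] fin n by auto
  define \<sigma> where "\<sigma> i = (if i < ?a then gA i else if i < ?b then gB i else if i < n then gD i else i)" for i
  have blockA: "bij_betw \<sigma> {0..<?a} A"
    using gA by (rule bij_betw_cong[THEN iffD1, rotated]) (simp add: \<sigma>_def)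
  have blockB: "bij_betw \<sigma> {?a..<?b} B"
    using gB by (rule bij_betw_cong[THEN iffD1, rotated]) (simp add: \<sigma>_def)
  have blockD: "bij_betw \<sigma> {?b..<n} D"
    using gD by (rule bij_betw_cong[THEN iffD1, rotated]) (simp add: \<sigma>_def)
  have "{0..<?a} \<union> {?a..<?b} \<union> {?b..<n} = {0..<n}" using n by auto
  then have "bij_betw \<sigma> {0..<n} {0..<n}"
    using bij_betw_combine[OF bij_betw_combine[OF blockA blockB disj(1)] blockD disj(2)] cover
    by simp
  then have "\<sigma> permutes {0..<n}" by (rule bij_imp_permutes) (use n in \<open>simp add: \<sigma>_def\<close>)
  then show ?thesis using that bij_betwE[OF blockA] bij_betwE[OF blockB] bij_betwE[OF blockD]
    by simp
qed

lemma exists_permutes_canon_weight: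
  assumes w: "\<And>i. i < n \<Longrightarrow> w i \<in> {0, 1, 2}" and j: "j < n" "w j = 1"
  obtains \<sigma> c t where "\<sigma> permutes {0..<n}" "c \<le> t" "t < n"
    "\<And>i. i < n \<Longrightarrow> w (\<sigma> i) = canon_weight c t i"
proof -
  let ?A = "{i. i < n \<and> w i = 0}" and ?B = "{i. i < n \<and> w i = 2}" and ?D = "{i. i < n \<and> w i = 1}"
  have cover: "?A \<union> ?B \<union> ?D = {0..<n}"
  proof (intro set_eqI iffI)
    fix i assume "i \<in> {0..<n}"
    then show "i \<in> ?A \<union> ?B \<union> ?D" using w[of i] by auto
  qed auto
  have disj: "?A \<inter> ?B = {}" "(?A \<union> ?B) \<inter> ?D = {}" by auto
  obtain \<sigma> where \<sigma>: "\<sigma> permutes {0..<n}"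
    "\<And>i. i < card ?A \<Longrightarrow> \<sigma> i \<in> ?A"
    "\<And>i. card ?A \<le> i \<Longrightarrow> i < card ?A + card ?B \<Longrightarrow> \<sigma> i \<in> ?B"
    "\<And>i. card ?A + card ?B \<le> i \<Longrightarrow> i < n \<Longrightarrow> \<sigma> i \<in> ?D"
    using permutes_onto_blocks[OF cover disj] by blast
  have "card ?A + card ?B < n"
  proof (rule ccontr)
    assume "\<not> card ?A + card ?B < n"
    then have "\<sigma> i \<in> ?A \<union> ?B" if "i < n" for i
      using \<sigma>(2)[of i] \<sigma>(3)[of i] that by (cases "i < card ?A") auto
    moreover obtain i where "i < n" "\<sigma> i = j"
      using permutes_surj[OF \<sigma>(1)] j(1) Permutations.permutes_nat_inv_less[OF \<sigma>(1) j(1)]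
      by (metis permutes_inverses(1)[OF \<sigma>(1)])
    ultimately show False using j(2) by fastforce
  qed
  moreover have "w (\<sigma> i) = canon_weight (card ?A) (card ?A + card ?B) i" if "i < n" for i
    using \<sigma>(2-4)[of i] that by (auto simp: canon_weight_def not_less)
  ultimately show ?thesis by (intro that[OF \<sigma>(1), of "card ?A" "card ?A + card ?B"]) simp_all
qed

lemma code_equiv_canon_code:
  assumes C: "is_code n C" and type: "has_type C (n - 1) 0" and n: "n \<ge> 1"
  obtains c t where "c \<le> t" "t < n" "code_equiv n C (canon_code n c t)"
proof -
  obtain v j where j: "j < n" "v j = 1" and C_eq: "C = kernel_code n v"
    using code_eq_kernel_code[OF assms] by blast
  \<comment> \<open>flipping the coordinates of weight 3 leaves only the weights 0, 1, 2\<close>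
  define s where "s i = (if v i mod 4 = 3 then -1 else 1 :: int)" for i
  define w where "w i = (s i * v i) mod 4" for i
  have s: "sign_vector s" by (simp add: sign_vector_def s_def)
  have "monomial_map id s ` C = kernel_code n w"
    unfolding C_eq monomial_map_kernel_code[OF permutes_id s] by (rule kernel_code_cong) (simp add: w_def)
  then have "code_equiv n C (kernel_code n w)"
    unfolding code_equiv_iff_monomial_map using s by (metis permutes_id)
  have "w i \<in> {0, 1, 2}" for i
  proof -
    have "v i mod 4 \<in> {0, 1, 2, 3}" by auto
    then show ?thesis by (auto simp: w_def s_def mod_minus_eq[of "v i", symmetric])
  qed
  moreover have "w j = 1" using j(2) by (simp add: w_def s_def)
  ultimately obtain \<sigma> c t where \<sigma>: "\<sigma> permutes {0..<n}" and ct: "c \<le> t" "t < n"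
    and sorted: "\<And>i. i < n \<Longrightarrow> w (\<sigma> i) = canon_weight c t i"
    using exists_permutes_canon_weight[of n w j] j(1) by blast
  have one: "sign_vector (\<lambda>_. 1)" by (simp add: sign_vector_def)
  have "monomial_map \<sigma> (\<lambda>_. 1) ` kernel_code n w = canon_code n c t"
    unfolding canon_code_def monomial_map_kernel_code[OF \<sigma> one]
    by (rule kernel_code_cong) (simp add: sorted)
  then have "code_equiv n (kernel_code n w) (canon_code n c t)"
    unfolding code_equiv_iff_monomial_map using \<sigma> one by metis
  with \<open>code_equiv n C (kernel_code n w)\<close> show ?thesis
    using that ct code_equiv_trans by blast
qed

lemma unit_vec_count_canon_code:
  assumes "c \<le> t" "t < n"
  shows "unit_vec_count n 1 (canon_code n c t) = c" "unit_vec_count n 2 (canon_code n c t) = t"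
proof -
  have "{i. i < n \<and> unit_vec i 1 \<in> canon_code n c t} = {..<c}"
    using assms by (auto simp: canon_code_def unit_vec_in_kernel_code_iff canon_weight_def split: if_splits)
  then show "unit_vec_count n 1 (canon_code n c t) = c" by (simp add: unit_vec_count_def)
  have "{i. i < n \<and> unit_vec i 2 \<in> canon_code n c t} = {..<t}"
    using assms by (auto simp: canon_code_def unit_vec_in_kernel_code_iff canon_weight_def split: if_splits)
  then show "unit_vec_count n 2 (canon_code n c t) = t" by (simp add: unit_vec_count_def)
qed

definition full_support :: "nat \<Rightarrow> (nat \<Rightarrow> int) set \<Rightarrow> bool" where
  "full_support n C \<longleftrightarrow> (\<forall>k<n. \<exists>x\<in>C. x k \<noteq> 0)"

lemma not_code_equiv_shorter_code:
  assumes n: "n \<ge> 1" and C: "is_code n C" "full_support n C" and D: "is_code (n - 1) D"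
  shows "\<not> code_equiv n C D"
proof
  assume "code_equiv n C D"
  then obtain \<sigma> s where \<sigma>s: "\<sigma> permutes {0..<n}" "sign_vector s" "D = monomial_map \<sigma> s ` C"
    unfolding code_equiv_iff_monomial_map by blast
  have "\<sigma> (n - 1) < n" using Permutations.permutes_nat_less[OF \<sigma>s(1)] n by simp
  then obtain x where x: "x \<in> C" "x (\<sigma> (n - 1)) \<noteq> 0" using C(2) unfolding full_support_def by blast
  have "monomial_map \<sigma> s x (n - 1) = 0"
    using zvec_beyond[OF is_code_zvec[OF D], of _ "n - 1"] \<sigma>s(3) x(1) by blast
  then have "(s (n - 1) * ((s (n - 1) * x (\<sigma> (n - 1))) mod 4)) mod 4 = 0"
    by (simp add: monomial_map_def)
  moreover have "(s (n - 1) * ((s (n - 1) * x (\<sigma> (n - 1))) mod 4)) mod 4 = x (\<sigma> (n - 1))"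
    using is_code_zvec[OF C(1) x(1)]
    by (intro sign_vector_mult_mod_cancel[OF \<sigma>s(2)] zvec_nonneg zvec_less)
  ultimately show False using x(2) by simp
qed

lemma full_support_kernel_code:
  assumes p: "p < n" "v p = 1" and i: "i < n" "i \<noteq> p" "v i mod 4 \<noteq> 0"
  shows "full_support n (kernel_code n v)"
  unfolding full_support_def
proof (intro allI impI)
  fix k assume k: "k < n"
  show "\<exists>x\<in>kernel_code n v. x k \<noteq> 0"
  proof (cases "k = p")
    case True
    have "(- v i) mod 4 \<noteq> 0" using i(3) by (simp add: mod_eq_0_iff_dvd)
    then show ?thesis
      using kernel_code_witness[of i n p v, OF i(1) p(1) i(2) p(2)] i(2) True by (intro bexI) auto
  next
    case False
    then show ?thesis
      using kernel_code_witness[of k n p v, OF k p(1) False p(2)] by (intro bexI) auto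
  qed
qed

lemma full_support_canon_code:
  assumes "c \<le> t" "t < n" "(c, t) \<noteq> (n - 1, n - 1)"
  shows "full_support n (canon_code n c t)"
proof -
  have "n \<ge> 2" using assms by auto
  moreover have "canon_weight c t (n - 2) \<in> {1, 2}" "canon_weight c t (n - 1) = 1"
    using assms by (auto simp: canon_weight_def)
  ultimately show ?thesis
    unfolding canon_code_def by (intro full_support_kernel_code[of "n - 1" _ _ "n - 2"]) auto
qed

lemma is_code_shrink: "is_code n C \<Longrightarrow> C \<subseteq> {f. zvec 4 m f} \<Longrightarrow> is_code m C"
  by (simp add: is_code_def)

lemma is_code_canon_code_shorter:
  assumes "n \<ge> 1"
  shows "is_code (n - 1) (canon_code n (n - 1) (n - 1))"
proof (rule is_code_shrink)
  show "is_code n (canon_code n (n - 1) (n - 1))" unfolding canon_code_def by (rule is_code_kernel_code)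
  show "canon_code n (n - 1) (n - 1) \<subseteq> {f. zvec 4 (n - 1) f}"
  proof
    fix x assume x: "x \<in> canon_code n (n - 1) (n - 1)"
    then have z: "zvec 4 n x" by (simp add: canon_code_def kernel_code_def)
    have "(\<Sum>i<n. canon_weight (n - 1) (n - 1) i * x i) = (\<Sum>i<n. if i = n - 1 then x i else 0)"
      by (intro sum.cong) (auto simp: canon_weight_def)
    also have "\<dots> = x (n - 1)" using assms by (simp add: sum.delta')
    finally have "x (n - 1) mod 4 = 0 mod 4" using x by (simp add: canon_code_def kernel_code_def)
    with z have "x (n - 1) = 0" by (intro zvec_eq_if_mod_eq[of 4 n x "\<lambda>_. 0"]) (simp_all add: zvec_def)
    then have "x i = 0" if "n - 1 \<le> i" for i
      using that zvec_beyond[OF z, of i] by (cases "i = n - 1") auto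
    then show "x \<in> {f. zvec 4 (n - 1) f}" using z by (simp add: zvec_def)
  qed
qed

definition unit_vec_counts :: "nat \<Rightarrow> (nat \<Rightarrow> int) set \<Rightarrow> nat \<times> nat" where
  "unit_vec_counts n C = (unit_vec_count n 1 C, unit_vec_count n 2 C)"

lemma unit_vec_counts_code_equiv:
  "is_code n C \<Longrightarrow> code_equiv n C D \<Longrightarrow> unit_vec_counts n D = unit_vec_counts n C"
  by (simp add: unit_vec_counts_def unit_vec_count_code_equiv)

lemma code_equiv_canon_code_counts:
  assumes "is_code n C" "has_type C (n - 1) 0" "n \<ge> 1"
  obtains c t where "c \<le> t" "t < n" "unit_vec_counts n C = (c, t)"
    "code_equiv n C (canon_code n c t)"
proof -
  obtain c t where ct: "c \<le> t" "t < n" and eq: "code_equiv n C (canon_code n c t)"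
    using code_equiv_canon_code[OF assms] by blast
  have "unit_vec_counts n C = (c, t)"
    using unit_vec_counts_code_equiv[OF assms(1) eq] unit_vec_count_canon_code[OF ct]
    by (simp add: unit_vec_counts_def)
  then show ?thesis using that ct eq by blast
qed

lemma code_equiv_iff_unit_vec_counts:
  assumes n: "n \<ge> 1" and C: "is_code n C" "has_type C (n - 1) 0"
    and D: "is_code n D" "has_type D (n - 1) 0"
  shows "code_equiv n C D \<longleftrightarrow> unit_vec_counts n C = unit_vec_counts n D"
proof
  assume "code_equiv n C D"
  then show "unit_vec_counts n C = unit_vec_counts n D"
    using unit_vec_counts_code_equiv[OF C(1)] by simp
next
  assume counts: "unit_vec_counts n C = unit_vec_counts n D"
  obtain c t where "unit_vec_counts n C = (c, t)" "code_equiv n C (canon_code n c t)"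
    using code_equiv_canon_code_counts[OF C n] by blast
  moreover obtain c' t' where "unit_vec_counts n D = (c', t')" "code_equiv n D (canon_code n c' t')"
    using code_equiv_canon_code_counts[OF D n] by blast
  ultimately show "code_equiv n C D"
    using counts code_equiv_sym[OF _ D(1)] code_equiv_trans by auto
qed

(* The canonical code for (n-1, n-1) vanishes on the last coordinate; all others have full
   support.  Note that triv_ext is the identity in this representation. *)
lemma codes_nontriv_iff:
  assumes n: "n \<ge> 1"
  shows "C \<in> codes_nontriv n (n - 1) 0 \<longleftrightarrow>
    is_code n C \<and> has_type C (n - 1) 0 \<and> unit_vec_counts n C \<noteq> (n - 1, n - 1)"
proof (cases "is_code n C \<and> has_type C (n - 1) 0")
  case True
  then obtain c t where ct: "c \<le> t" "t < n" and counts: "unit_vec_counts n C = (c, t)"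
    and eq: "code_equiv n C (canon_code n c t)"
    using code_equiv_canon_code_counts[OF _ _ n] by blast
  show ?thesis
  proof
    assume "C \<in> codes_nontriv n (n - 1) 0"
    moreover have "triv_ext (canon_code n (n - 1) (n - 1)) = canon_code n (n - 1) (n - 1)"
      by (simp add: triv_ext_def)
    ultimately show "is_code n C \<and> has_type C (n - 1) 0 \<and> unit_vec_counts n C \<noteq> (n - 1, n - 1)"
      using True eq counts is_code_canon_code_shorter[OF n] unfolding codes_nontriv_def by fastforce
  next
    assume "is_code n C \<and> has_type C (n - 1) 0 \<and> unit_vec_counts n C \<noteq> (n - 1, n - 1)"
    then have full: "full_support n (canon_code n c t)"
      using full_support_canon_code[OF ct] counts by simp
    have "\<not> code_equiv n C (triv_ext D)" if D: "is_code (n - 1) D" for D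
    proof
      assume "code_equiv n C (triv_ext D)"
      then have "code_equiv n (canon_code n c t) D"
        using code_equiv_trans[OF code_equiv_sym[OF eq True[THEN conjunct1]]] by (simp add: triv_ext_def)
      then show False
        using not_code_equiv_shorter_code[OF n _ full D] is_code_kernel_code
        by (simp add: canon_code_def)
    qed
    then show "C \<in> codes_nontriv n (n - 1) 0" using True unfolding codes_nontriv_def by blast
  qed
qed (auto simp: codes_nontriv_def)

lemma unit_vec_counts_codes_nontriv:
  assumes n: "n \<ge> 1"
  shows "unit_vec_counts n ` codes_nontriv n (n - 1) 0 = {(c, t). c \<le> t \<and> t < n} - {(n - 1, n - 1)}"
proof (intro set_eqI iffI)
  fix p assume "p \<in> unit_vec_counts n ` codes_nontriv n (n - 1) 0"
  then obtain C where C: "C \<in> codes_nontriv n (n - 1) 0" and p: "p = unit_vec_counts n C" by blast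
  then have C': "is_code n C" "has_type C (n - 1) 0" "unit_vec_counts n C \<noteq> (n - 1, n - 1)"
    using codes_nontriv_iff[OF n] by auto
  obtain c t where "c \<le> t" "t < n" "unit_vec_counts n C = (c, t)"
    using code_equiv_canon_code_counts[OF C'(1,2) n] by blast
  then show "p \<in> {(c, t). c \<le> t \<and> t < n} - {(n - 1, n - 1)}" using C'(3) p by auto
next
  fix p assume "p \<in> {(c, t). c \<le> t \<and> t < n} - {(n - 1, n - 1)}"
  then obtain c t where p: "p = (c, t)" and ct: "c \<le> t" "t < n" "(c, t) \<noteq> (n - 1, n - 1)" by auto
  have counts: "unit_vec_counts n (canon_code n c t) = (c, t)"
    using unit_vec_count_canon_code[OF ct(1,2)] by (simp add: unit_vec_counts_def)
  have "has_type (canon_code n c t) (n - 1) 0"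
    unfolding canon_code_def using n ct by (intro has_type_kernel_code) (auto simp: canon_weight_def)
  then have "canon_code n c t \<in> codes_nontriv n (n - 1) 0"
    using codes_nontriv_iff[OF n] is_code_kernel_code counts ct(3) by (simp add: canon_code_def)
  then show "p \<in> unit_vec_counts n ` codes_nontriv n (n - 1) 0" using counts p by (metis image_eqI)
qed

lemma card_quotient_eq_card_image:
  "card (A // {(x, y). x \<in> A \<and> y \<in> A \<and> f x = f y}) = card (f ` A)"
proof -
  let ?R = "{(x, y). x \<in> A \<and> y \<in> A \<and> f x = f y}"
  have "?R `` {x} = A \<inter> f -` {f x}" if "x \<in> A" for x using that by auto
  then have "A // ?R = (\<lambda>x. A \<inter> f -` {f x}) ` A" unfolding quotient_def by auto
  then have "A // ?R = (\<lambda>b. A \<inter> f -` {b}) ` f ` A" by (simp add: image_image)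
  moreover have "inj_on (\<lambda>b. A \<inter> f -` {b}) (f ` A)" by (auto simp: inj_on_def)
  ultimately show ?thesis by (simp add: card_image)
qed

lemma card_ordered_pairs_less: "card {(c, t). c \<le> t \<and> t < n} = n * (n + 1) div 2"
proof -
  have "finite {(c, t). c \<le> t \<and> t < n} \<and> 2 * card {(c, t). c \<le> t \<and> t < n} = n * (n + 1)"
    (is "_ \<and> ?double")
  proof (induction n)
    case (Suc n)
    have eq: "{(c, t). c \<le> t \<and> t < Suc n} = {(c, t). c \<le> t \<and> t < n} \<union> (\<lambda>c. (c, n)) ` {..n}"
      by auto
    have "card ((\<lambda>c. (c, n)) ` {..n}) = n + 1" by (subst card_image) (auto simp: inj_on_def)
    then have "card {(c, t). c \<le> t \<and> t < Suc n} = card {(c, t). c \<le> t \<and> t < n} + (n + 1)"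
      unfolding eq using Suc.IH by (subst card_Un_disjoint) auto
    then show ?case using Suc.IH unfolding eq by simp
  qed simp
  then have ?double ..
  then show ?thesis by (subst \<open>?double\<close>[symmetric]) simp
qed

theorem mainTheorem8:
  fixes n :: nat
  assumes "n \<ge> 1"
  shows "Nprime n (n - 1) 0 = n * (n + 1) div 2 - 1"
proof -
  let ?A = "codes_nontriv n (n - 1) 0"
  have "{(C, D). C \<in> ?A \<and> D \<in> ?A \<and> code_equiv n C D}
      = {(C, D). C \<in> ?A \<and> D \<in> ?A \<and> unit_vec_counts n C = unit_vec_counts n D}"
    using code_equiv_iff_unit_vec_counts[OF assms] codes_nontriv_iff[OF assms] by blast
  then have "Nprime n (n - 1) 0 = card (unit_vec_counts n ` ?A)"
    unfolding Nprime_def by (simp add: card_quotient_eq_card_image)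
  also have "\<dots> = card ({(c, t). c \<le> t \<and> t < n} - {(n - 1, n - 1)})"
    using unit_vec_counts_codes_nontriv[OF assms] by simp
  also have "\<dots> = n * (n + 1) div 2 - 1"
    using assms card_ordered_pairs_less[of n] by (subst card_Diff_singleton) auto
  finally show ?thesis .
qed

end
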